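(* Let $q\in\mathbb C[z]$ with $q(0)=0$, let $n\in\mathbb N$ and $k>0$ with $\deg q<n$. For $c>0$ put $\delta(c)=(2kc)^{-1/n}$ and $q_c=k(cz^n-q)$. Then for every sufficiently large $c>0$, $q_c(\delta(c)\mathbb D)\subseteq\mathbb D$ and all zeros of $q_c$ belong to $\delta(c)\mathbb D$.
   Context: $\mathbb D=\{z\in\mathbb C:|z|<1\}$. *)

theory Defs
  imports "HOL-Analysis.Analysis" "HOL-Computational_Algebra.Polynomial"
begin

end

theory Submission
  imports Defs
begin

text \<open>
  Write \<open>q z = z p(z)\<close> with \<open>deg p < n\<close> and let \<open>B\<close> be the sum of the moduli of the
  coefficients of \<open>p\<close>, so that \<open>|p(z)| \<le> B max(1,|z|)\<^sup>n\<^sup>-\<^sup>1\<close>. The radius \<open>\<delta> = \<delta>(c)\<close> is chosen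
  so that \<open>k c \<delta>\<^sup>n = 1/2\<close>; since \<open>\<delta> \<rightarrow> 0\<close>, eventually \<open>\<delta> \<le> 1\<close>, \<open>k B \<delta> < 1/2\<close> and \<open>c > B\<close>.
  On \<open>\<delta>\<bbbD>\<close> the monomial contributes less than \<open>1/2\<close> and \<open>k z p(z)\<close> less than \<open>1/2\<close>.
  A zero \<open>z \<noteq> 0\<close> satisfies \<open>c|z|\<^sup>n\<^sup>-\<^sup>1 = |p(z)|\<close>: outside the unit disk this forces
  \<open>c \<le> B\<close>, and in the annulus \<open>\<delta> \<le> |z| < 1\<close> it forces \<open>c \<delta>\<^sup>n \<le> B \<delta>\<close>, i.e. \<open>k B \<delta> \<ge> 1/2\<close>.
\<close>

lemma norm_poly_le_coeff_norm_sum: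
  fixes p :: "'a::real_normed_field poly"
  shows "norm (poly p z) \<le> (\<Sum>i\<le>degree p. norm (coeff p i)) * max 1 (norm z) ^ degree p"
proof -
  have "norm (poly p z) \<le> (\<Sum>i\<le>degree p. norm (coeff p i * z ^ i))"
    unfolding poly_altdef by (rule norm_sum)
  also have "\<dots> \<le> (\<Sum>i\<le>degree p. norm (coeff p i) * max 1 (norm z) ^ degree p)"
  proof (rule sum_mono)
    fix i assume "i \<in> {..degree p}"
    then have "norm z ^ i \<le> max 1 (norm z) ^ degree p"
      by (meson atMost_iff max.cobounded1 max.cobounded2 norm_ge_zero order_trans
          power_increasing power_mono)
    then show "norm (coeff p i * z ^ i) \<le> norm (coeff p i) * max 1 (norm z) ^ degree p"
      by (simp add: norm_mult norm_power mult_left_mono)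
  qed
  finally show ?thesis
    by (simp add: sum_distrib_right)
qed

lemma mult_powr_neg_inverse_power_eq_half:
  assumes "k > 0" and "c > 0" and "n > 0"
  shows "k * c * ((2 * k * c) powr (- 1 / real n)) ^ n = 1 / 2"
proof -
  have "((2 * k * c) powr (- 1 / real n)) ^ n = (2 * k * c) powr (real n * (- 1 / real n))"
    using assms by (simp add: powr_power)
  also have "\<dots> = 1 / (2 * k * c)"
    using assms by (simp add: powr_neg_one)
  finally show ?thesis
    using assms by simp
qed

lemma poly_eq_times_bounded_poly:
  fixes q :: "'a::real_normed_field poly"
  assumes "poly q 0 = 0" and "degree q < n"
  obtains p B where "\<And>z. poly q z = z * poly p z"
    and "\<forall>w. norm (poly p w) \<le> B * max 1 (norm w) ^ (n - 1)"
proof -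
  obtain p where "q = pCons 0 p"
    using assms(1) by (cases q) auto
  then have q_eq: "\<And>z. poly q z = z * poly p z" and "degree p < n"
    using assms(2) by (auto simp: degree_pCons_eq_if split: if_splits)
  define B where "B = (\<Sum>i\<le>degree p. norm (coeff p i))"
  have "norm (poly p w) \<le> B * max 1 (norm w) ^ (n - 1)" for w
  proof -
    have "max 1 (norm w) ^ degree p \<le> max 1 (norm w) ^ (n - 1)"
      using \<open>degree p < n\<close> by (intro power_increasing) auto
    then show ?thesis
      using norm_poly_le_coeff_norm_sum[of p w] unfolding B_def
      by (meson order_trans mult_left_mono sum_nonneg norm_ge_zero)
  qed
  with q_eq show thesis by (intro that) auto
qed

lemma norm_monomial_minus_shifted_poly_lt_one:
  fixes p :: "complex poly" and z :: complex
  assumes "k > 0" and "c \<ge> 0" and "norm z < \<delta>" and "\<delta> \<le> 1"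
    and "k * c * \<delta> ^ n = 1 / 2" and "k * B * \<delta> < 1 / 2"
    and bound: "\<forall>w. norm (poly p w) \<le> B * max 1 (norm w) ^ (n - 1)"
  shows "norm (of_real k * (of_real c * z ^ n - z * poly p z)) < 1"
proof -
  have "norm z ^ n \<le> \<delta> ^ n"
    using assms(3) by (intro power_mono) auto
  then have monomial: "k * (c * norm z ^ n) \<le> 1 / 2"
    using assms(1,2,5) by (metis mult.assoc mult_left_mono less_imp_le)
  have "norm (poly p z) \<le> B"
    using bound[rule_format, of z] assms(3,4) by simp
  moreover have "\<delta> \<ge> 0"
    using assms(3) norm_ge_zero[of z] by linarith
  ultimately have "norm z * norm (poly p z) \<le> \<delta> * B"
    using assms(3) by (intro mult_mono) auto
  then have shifted: "k * (norm z * norm (poly p z)) < 1 / 2"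
    using assms(1,6) by (smt (verit) mult.commute mult.left_commute mult_left_mono)
  have "norm (of_real k * (of_real c * z ^ n - z * poly p z))
      \<le> k * (c * norm z ^ n + norm z * norm (poly p z))"
    using assms(1,2) norm_triangle_ineq4[of "of_real c * z ^ n" "z * poly p z"]
    by (simp add: norm_mult norm_power mult_left_mono)
  also have "\<dots> < 1"
    using monomial shifted by (simp add: distrib_left)
  finally show ?thesis .
qed

lemma root_of_monomial_minus_shifted_poly_in_ball:
  fixes p :: "complex poly" and z :: complex
  assumes "n \<ge> 1" and "k > 0" and "c > B" and "\<delta> > 0"
    and "k * c * \<delta> ^ n = 1 / 2" and "k * B * \<delta> < 1 / 2"
    and bound: "\<forall>w. norm (poly p w) \<le> B * max 1 (norm w) ^ (n - 1)"
    and root: "of_real c * z ^ n = z * poly p z"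
  shows "norm z < \<delta>"
proof (rule ccontr)
  assume "\<not> norm z < \<delta>"
  then have far: "\<delta> \<le> norm z" by simp
  with assms(4) have "z \<noteq> 0" by auto
  have "norm (poly p 0) \<le> B"
    using bound[rule_format, of 0] by simp
  then have "B \<ge> 0"
    by (rule order_trans[OF norm_ge_zero])
  with assms(3) have "c > 0" by simp
  have "k * (B * \<delta>) < k * (c * \<delta> ^ n)"
    using assms(5,6) by (simp add: mult.assoc)
  then have small: "B * \<delta> < c * \<delta> ^ n"
    using assms(2) by simp
  have "z * (of_real c * z ^ (n - 1)) = z * poly p z"
    using root assms(1) by (simp add: power_eq_if)
  then have "norm (of_real c * z ^ (n - 1)) = norm (poly p z)"
    using \<open>z \<noteq> 0\<close> by simp
  then have eq: "c * norm z ^ (n - 1) = norm (poly p z)"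
    using \<open>c > 0\<close> by (simp add: norm_mult norm_power)
  show False
  proof (cases "norm z \<ge> 1")
    case True
    then have "c * norm z ^ (n - 1) \<le> B * norm z ^ (n - 1)"
      using eq bound by (metis max.absorb2)
    then show False
      using True assms(3) \<open>z \<noteq> 0\<close> by (simp add: mult_le_cancel_right)
  next
    case False
    have "c * \<delta> ^ (n - 1) \<le> c * norm z ^ (n - 1)"
      using far assms(4) \<open>c > 0\<close> by (intro mult_left_mono power_mono) auto
    also have "\<dots> \<le> B"
      using eq bound False by (metis max.absorb1 nle_le power_one mult_1_right)
    finally have "c * \<delta> ^ (n - 1) * \<delta> \<le> B * \<delta>"
      using assms(4) by (simp add: mult_right_mono)
    then show False
      using assms(1) small by (simp add: power_eq_if mult_ac)
  qed
qed

lemma eventually_le_one_and_scaled_lt_half: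
  fixes f :: "'a \<Rightarrow> real"
  assumes "(f \<longlongrightarrow> 0) F"
  shows "\<forall>\<^sub>F x in F. f x \<le> 1 \<and> a * f x < 1 / 2"
proof -
  have "((\<lambda>x. a * f x) \<longlongrightarrow> 0) F"
    using assms by (rule tendsto_mult_right_zero)
  then have "\<forall>\<^sub>F x in F. a * f x < 1 / 2"
    by (rule order_tendstoD) simp
  moreover have "\<forall>\<^sub>F x in F. f x < 1"
    using assms by (rule order_tendstoD) simp
  ultimately show ?thesis
    by eventually_elim simp
qed

lemma tendsto_scaled_powr_neg_at_top:
  assumes "a > 0" and "n > 0"
  shows "((\<lambda>c. (a * c) powr (- 1 / real n)) \<longlongrightarrow> 0) at_top"
proof (rule tendsto_neg_powr)
  show "- 1 / real n < 0" using assms(2) by simp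
  show "filterlim (\<lambda>c. a * c) at_top at_top"
    using assms(1) by (intro filterlim_tendsto_pos_mult_at_top[OF tendsto_const])
      (auto simp: filterlim_ident)
qed

theorem lemma3p5:
  fixes q :: "complex poly" and n :: nat and k :: real
  assumes "poly q 0 = 0" and "k > 0" and "degree q < n"
  shows "\<forall>\<^sub>F c in at_top.
           (let \<delta> = (2 * k * c) powr (- 1 / real n);
                qc = (\<lambda>z::complex. complex_of_real k * (complex_of_real c * z ^ n - poly q z))
            in qc ` ball 0 \<delta> \<subseteq> ball 0 1 \<and> {z. qc z = 0} \<subseteq> ball 0 \<delta>)"
proof -
  have "n \<ge> 1" using assms(3) by simp
  obtain p B where q_eq: "\<And>z. poly q z = z * poly p z"
    and bound: "\<forall>w. norm (poly p w) \<le> B * max 1 (norm w) ^ (n - 1)"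
    using poly_eq_times_bounded_poly[OF assms(1,3)] by blast
  define \<delta> where "\<delta> c = (2 * k * c) powr (- 1 / real n)" for c
  have "(\<delta> \<longlongrightarrow> 0) at_top"
    unfolding \<delta>_def using assms(2) \<open>n \<ge> 1\<close> by (intro tendsto_scaled_powr_neg_at_top) auto
  then have "\<forall>\<^sub>F c in at_top. \<delta> c \<le> 1 \<and> k * B * \<delta> c < 1 / 2"
    by (rule eventually_le_one_and_scaled_lt_half)
  moreover have "\<forall>\<^sub>F c in at_top. c > B"
    by (rule eventually_gt_at_top)
  moreover have "\<forall>\<^sub>F c in at_top. c > (0::real)"
    by (rule eventually_gt_at_top)
  ultimately show ?thesis
  proof eventually_elim
    case (elim c)
    then have "\<delta> c \<le> 1" and small: "k * B * \<delta> c < 1 / 2" and "c > B" and "c > 0"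
      by auto
    then have "\<delta> c > 0"
      using assms(2) by (simp add: \<delta>_def)
    have radius: "k * c * \<delta> c ^ n = 1 / 2"
      unfolding \<delta>_def using \<open>c > 0\<close> assms(2) \<open>n \<ge> 1\<close> by (intro mult_powr_neg_inverse_power_eq_half) auto
    have "norm (of_real k * (of_real c * z ^ n - z * poly p z)) < 1" if "norm z < \<delta> c" for z
      using \<open>c > 0\<close> by (intro norm_monomial_minus_shifted_poly_lt_one[OF assms(2) _ that
          \<open>\<delta> c \<le> 1\<close> radius small bound]) simp
    moreover have "norm z < \<delta> c" if "of_real c * z ^ n = z * poly p z" for z
      by (rule root_of_monomial_minus_shifted_poly_in_ball[OF \<open>n \<ge> 1\<close> assms(2) \<open>c > B\<close>
          \<open>\<delta> c > 0\<close> radius small bound that])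
    ultimately show ?case
      unfolding Let_def \<delta>_def[symmetric] q_eq using assms(2) by auto
  qed
qed

end
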